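(* Let $n\ge1$ and let $\mathbb{F}$ be a field of characteristic $0$ or of odd prime characteristic $p$. In the group algebra $\mathbb{F}(SD_{8n})$: (i) the set $$\{a^{2k}-a^{-2k},\ (a^{2k}-a^{-2k})b\mid 1\le k\le n-1\}\cup\{a^{2k+1}-a^{2n-(2k+1)},\ (a^{2k+1}-a^{2n-(2k+1)})b\mid -\lfloor\tfrac n2\rfloor\le k\le\lfloor\tfrac n2\rfloor-1\}$$ is an $\mathbb{F}$-basis of $\bar{C}(b)$; (ii) the set $$\{a^{2k}-a^{-2k},\ a(a^{2k}-a^{-2k})b\mid 1\le k\le n-1\}\cup\{a^{2k+1}-a^{2n-(2k+1)},\ a(a^{2k+1}-a^{2n-(2k+1)})b\mid -\lfloor\tfrac n2\rfloor\le k\le\lfloor\tfrac n2\rfloor-1\}$$ is an $\mathbb{F}$-basis of $\bar{C}(ab)$.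
   Context: $SD_{8n}=\langle a,b\mid a^{4n}=b^2=1,\ bab=a^{2n-1}\rangle$ is the semi-dihedral group of order $8n$, with elements $a^ib^j$, $0\le i\le 4n-1$, $0\le j\le1$ (exponents of $a$ are taken modulo $4n$); $\mathbb{F}(SD_{8n})$ is its group algebra. For $\beta$ in the group algebra, the anti-centralizer is $\bar{C}(\beta)=\{\alpha\mid\alpha\beta=-\beta\alpha\}$, an $\mathbb{F}$-subspace. $\lfloor x\rfloor$ is the floor function. *)

theory Defs
  imports "HOL-Computational_Algebra.Primes" HOL.Modules "HOL-Library.Function_Algebras"
begin

text \<open>The group element a^i b^j (0 <= i < 4n, 0 <= j < 2)
  is encoded as the pair (i, j).\<close>

definition sd_grp :: "nat \<Rightarrow> (nat \<times> nat) set" where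
  "sd_grp n = {0..<4*n} \<times> {0..<2}"

text \<open>Group law: (a^i b^j)(a^k b^l) = a^(i + k (2n-1)^j) b^(j+l), since b a^k b = a^(k(2n-1)).\<close>
definition sd_mul :: "nat \<Rightarrow> nat \<times> nat \<Rightarrow> nat \<times> nat \<Rightarrow> nat \<times> nat" where
  "sd_mul n x y = ((fst x + fst y * (2*n - 1) ^ snd x) mod (4*n), (snd x + snd y) mod 2)"

definition sd_alg :: "nat \<Rightarrow> (nat \<times> nat \<Rightarrow> 'a::field) set" where
  "sd_alg n = {f. \<forall>x. x \<notin> sd_grp n \<longrightarrow> f x = 0}"

definition sd_conv :: "nat \<Rightarrow> (nat \<times> nat \<Rightarrow> 'a::field) \<Rightarrow> (nat \<times> nat \<Rightarrow> 'a) \<Rightarrow> (nat \<times> nat \<Rightarrow> 'a)" where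
  "sd_conv n f g = (\<lambda>x. \<Sum>y\<in>sd_grp n. \<Sum>z\<in>sd_grp n. if sd_mul n y z = x then f y * g z else 0)"

definition sd_elem :: "nat \<Rightarrow> int \<Rightarrow> nat \<Rightarrow> (nat \<times> nat \<Rightarrow> 'a::field)" where
  "sd_elem n m j = (\<lambda>x. if x = (nat (m mod int (4*n)), j) then 1 else 0)"

abbreviation sd_apow :: "nat \<Rightarrow> int \<Rightarrow> (nat \<times> nat \<Rightarrow> 'a::field)" where
  "sd_apow n m \<equiv> sd_elem n m 0"

abbreviation sd_a :: "nat \<Rightarrow> (nat \<times> nat \<Rightarrow> 'a::field)" where
  "sd_a n \<equiv> sd_elem n 1 0"

abbreviation sd_b :: "nat \<Rightarrow> (nat \<times> nat \<Rightarrow> 'a::field)" where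
  "sd_b n \<equiv> sd_elem n 0 1"

definition anti_cent :: "nat \<Rightarrow> (nat \<times> nat \<Rightarrow> 'a::field) \<Rightarrow> (nat \<times> nat \<Rightarrow> 'a) set" where
  "anti_cent n \<beta> = {\<alpha> \<in> sd_alg n. sd_conv n \<alpha> \<beta> = - sd_conv n \<beta> \<alpha>}"

definition fscale :: "'a::field \<Rightarrow> ('b \<Rightarrow> 'a) \<Rightarrow> ('b \<Rightarrow> 'a)" where
  "fscale c f = (\<lambda>x. c * f x)"

definition is_basis_of :: "('b \<Rightarrow> 'a::field) set \<Rightarrow> ('b \<Rightarrow> 'a) set \<Rightarrow> bool" where
  "is_basis_of B V \<longleftrightarrow> \<not> module.dependent fscale B \<and> module.span fscale B = V"

end

theory Submission
  imports Defs
begin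

(*
  For a group element g, the identity alpha g = - g alpha compares the coefficients of alpha at x
  and at g x g^-1: the anti-centralizer of g is the space of functions on the group that are odd
  under conjugation by g.  If 2 is invertible, the functions delta_p - delta_(tau p), with p running
  over one point of each non-trivial orbit of an involution tau, form a basis of that space.
  In SD_8n, conjugation by b and by ab maps a^i b^j to a^i' b^j, where i |-> i' is a reflection
  i |-> 2c - i of Z/4n whose centre c depends only on j and the parity of i.  The exponents in the
  open half-period (c, c + 2n) form a transversal of its non-trivial orbits, and they are exactly
  the exponents listed in the statement.
*)

definition point_mass :: "'b \<Rightarrow> 'b \<Rightarrow> 'a::zero_neq_one" where
  "point_mass p x = (if x = p then 1 else 0)"

definition antisym_space :: "'b set \<Rightarrow> ('b \<Rightarrow> 'b) \<Rightarrow> ('b \<Rightarrow> 'a::ab_group_add) set" where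
  "antisym_space S \<tau> = {f. (\<forall>x. x \<notin> S \<longrightarrow> f x = 0) \<and> (\<forall>x\<in>S. f (\<tau> x) = - f x)}"

lemma module_fscale: "module (fscale :: 'a::field \<Rightarrow> ('b \<Rightarrow> 'a) \<Rightarrow> _)"
  by unfold_locales (auto simp: fscale_def fun_eq_iff algebra_simps)

lemma fscale_sum_apply: "(\<Sum>v\<in>B. fscale (c v) (f v)) x = (\<Sum>v\<in>B. c v * f v x)"
  by (induction B rule: infinite_finite_induct) (auto simp: fscale_def)

lemma fscale_independent_if_separating_points:
  fixes B :: "('b \<Rightarrow> 'a::field) set"
  assumes "finite B" and sep: "\<And>v. v \<in> B \<Longrightarrow> \<exists>x. v x \<noteq> 0 \<and> (\<forall>w\<in>B. w \<noteq> v \<longrightarrow> w x = 0)"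
  shows "\<not> module.dependent fscale B"
proof
  interpret m: module "fscale :: 'a \<Rightarrow> ('b \<Rightarrow> 'a) \<Rightarrow> _" by (rule module_fscale)
  assume "m.dependent B"
  then obtain u v where v: "v \<in> B" "u v \<noteq> 0" and sum: "(\<Sum>w\<in>B. fscale (u w) w) = 0"
    using m.dependent_finite[OF \<open>finite B\<close>] by blast
  obtain x where x: "v x \<noteq> 0" "\<forall>w\<in>B. w \<noteq> v \<longrightarrow> w x = 0" using sep[OF v(1)] by blast
  have "0 = (\<Sum>w\<in>B. u w * w x)" using fun_cong[OF sum, of x] by (simp add: fscale_sum_apply)
  also have "\<dots> = (\<Sum>w\<in>B. if w = v then u v * v x else 0)"
    using x(2) by (intro sum.cong) auto
  also have "\<dots> = u v * v x" using v(1) \<open>finite B\<close> by simp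
  finally show False using x(1) v(2) by simp
qed

lemma subspace_antisym_space: "module.subspace fscale (antisym_space S \<tau> :: ('b \<Rightarrow> 'a::field) set)"
proof -
  interpret m: module "fscale :: 'a \<Rightarrow> ('b \<Rightarrow> 'a) \<Rightarrow> _" by (rule module_fscale)
  show ?thesis by (auto simp: m.subspace_def antisym_space_def fscale_def)
qed

lemma point_mass_diff_in_antisym_space:
  assumes \<tau>S: "\<tau> ` S \<subseteq> S" and invol: "\<And>x. x \<in> S \<Longrightarrow> \<tau> (\<tau> x) = x" and "p \<in> S"
  shows "point_mass p - point_mass (\<tau> p) \<in> (antisym_space S \<tau> :: ('b \<Rightarrow> 'a::field) set)"
proof -
  have "\<tau> x = p \<longleftrightarrow> x = \<tau> p" "\<tau> x = \<tau> p \<longleftrightarrow> x = p" if "x \<in> S" for x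
    using invol that \<open>p \<in> S\<close> by metis+
  moreover have "x \<noteq> p" "x \<noteq> \<tau> p" if "x \<notin> S" for x
    using that \<open>p \<in> S\<close> \<tau>S by auto
  ultimately show ?thesis by (simp add: antisym_space_def point_mass_def)
qed

lemma antisym_space_expansion:
  fixes f :: "'b \<Rightarrow> 'a::field"
  assumes "finite P" and \<tau>S: "\<tau> ` S \<subseteq> S" and invol: "\<And>x. x \<in> S \<Longrightarrow> \<tau> (\<tau> x) = x"
    and "P \<subseteq> S" and disj: "\<And>p. p \<in> P \<Longrightarrow> \<tau> p \<notin> P"
    and cover: "\<And>x. x \<in> S \<Longrightarrow> \<tau> x \<noteq> x \<Longrightarrow> x \<in> P \<or> \<tau> x \<in> P"
    and two: "(2::'a) \<noteq> 0" and f: "f \<in> antisym_space S \<tau>"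
  shows "f x = (\<Sum>p\<in>P. f p * (point_mass p - point_mass (\<tau> p)) x)"
proof -
  have "(\<Sum>p\<in>P. f p * (point_mass p - point_mass (\<tau> p)) x)
      = (\<Sum>p\<in>P. if x = p then f p else 0) - (\<Sum>p\<in>P. if x = \<tau> p then f p else 0)"
    by (auto simp: point_mass_def right_diff_distrib intro!: sum.cong simp flip: sum_subtractf)
  also have "\<dots> = f x"
  proof (cases "x \<in> S")
    case False
    have "x \<noteq> p" "x \<noteq> \<tau> p" if "p \<in> P" for p
      using that False \<open>P \<subseteq> S\<close> \<tau>S by auto
    moreover have "f x = 0" using False f by (simp add: antisym_space_def)
    ultimately show ?thesis by (simp add: sum.neutral)
  next
    case True
    have "(\<Sum>p\<in>P. if x = \<tau> p then f p else 0) = (\<Sum>p\<in>P. if p = \<tau> x then f p else 0)"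
      using True \<open>P \<subseteq> S\<close> invol by (intro sum.cong) auto
    hence sums: "(\<Sum>p\<in>P. if x = p then f p else 0) - (\<Sum>p\<in>P. if x = \<tau> p then f p else 0)
        = (if x \<in> P then f x else 0) - (if \<tau> x \<in> P then f (\<tau> x) else 0)"
      using \<open>finite P\<close> by simp
    have f\<tau>: "f (\<tau> x) = - f x" using True f by (simp add: antisym_space_def)
    consider "x \<in> P" | "\<tau> x \<in> P" | "\<tau> x = x" "x \<notin> P" using cover[OF True] by blast
    thus ?thesis
    proof cases
      case 1
      thus ?thesis using sums disj by simp
    next
      case 2
      hence "x \<notin> P" using disj invol[OF True] by metis
      thus ?thesis using sums f\<tau> 2 by simp
    next
      case 3
      hence "f x = 0" using two f\<tau> by (simp add: eq_neg_iff_add_eq_0 flip: mult_2)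
      thus ?thesis using sums 3 by simp
    qed
  qed
  finally show ?thesis ..
qed

lemma point_mass_diff_independent:
  assumes "finite P" and disj: "\<And>p. p \<in> P \<Longrightarrow> \<tau> p \<notin> P"
  shows "\<not> module.dependent fscale ((\<lambda>p. point_mass p - point_mass (\<tau> p)) ` P :: ('b \<Rightarrow> 'a::field) set)"
proof (rule fscale_independent_if_separating_points)
  show "finite ((\<lambda>p. point_mass p - point_mass (\<tau> p)) ` P :: ('b \<Rightarrow> 'a) set)" using \<open>finite P\<close> by blast
  fix v :: "'b \<Rightarrow> 'a" assume "v \<in> (\<lambda>p. point_mass p - point_mass (\<tau> p)) ` P"
  then obtain p where p: "p \<in> P" "v = point_mass p - point_mass (\<tau> p)" by blast
  have "\<tau> p \<noteq> p" using disj p(1) by metis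
  hence "v p = 1" using p(2) by (simp add: point_mass_def)
  moreover have "w p = 0" if w: "w \<in> (\<lambda>p. point_mass p - point_mass (\<tau> p)) ` P" "w \<noteq> v" for w
  proof -
    obtain q where q: "q \<in> P" "w = point_mass q - point_mass (\<tau> q)" using w(1) by blast
    hence "p \<noteq> q" "p \<noteq> \<tau> q" using w(2) p disj by blast+
    thus ?thesis using q(2) by (simp add: point_mass_def)
  qed
  ultimately show "\<exists>x. v x \<noteq> 0 \<and> (\<forall>w\<in>(\<lambda>p. point_mass p - point_mass (\<tau> p)) ` P. w \<noteq> v \<longrightarrow> w x = 0)"
    by (intro exI[of _ p]) simp
qed

lemma antisym_space_basis:
  fixes \<tau> :: "'b \<Rightarrow> 'b" and S P :: "'b set"
  assumes "finite S" and \<tau>S: "\<tau> ` S \<subseteq> S" and invol: "\<And>x. x \<in> S \<Longrightarrow> \<tau> (\<tau> x) = x"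
    and "P \<subseteq> S" and disj: "\<And>p. p \<in> P \<Longrightarrow> \<tau> p \<notin> P"
    and cover: "\<And>x. x \<in> S \<Longrightarrow> \<tau> x \<noteq> x \<Longrightarrow> x \<in> P \<or> \<tau> x \<in> P"
    and two: "(2::'a::field) \<noteq> 0"
  shows "is_basis_of ((\<lambda>p. point_mass p - point_mass (\<tau> p)) ` P) (antisym_space S \<tau> :: ('b \<Rightarrow> 'a) set)"
proof -
  interpret m: module "fscale :: 'a \<Rightarrow> ('b \<Rightarrow> 'a) \<Rightarrow> _" by (rule module_fscale)
  define D :: "'b \<Rightarrow> 'b \<Rightarrow> 'a" where "D = (\<lambda>p. point_mass p - point_mass (\<tau> p))"
  have "finite P" using \<open>finite S\<close> \<open>P \<subseteq> S\<close> finite_subset by blast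
  have "m.span (D ` P) \<subseteq> antisym_space S \<tau>"
    using point_mass_diff_in_antisym_space[OF \<tau>S invol] \<open>P \<subseteq> S\<close>
    by (intro m.span_minimal subspace_antisym_space) (auto simp: D_def)
  moreover have "antisym_space S \<tau> \<subseteq> m.span (D ` P)"
  proof
    fix f :: "'b \<Rightarrow> 'a" assume "f \<in> antisym_space S \<tau>"
    hence "f = (\<Sum>p\<in>P. fscale (f p) (D p))"
      using antisym_space_expansion[OF \<open>finite P\<close> \<tau>S invol \<open>P \<subseteq> S\<close> disj cover two]
      by (simp add: fun_eq_iff fscale_sum_apply D_def)
    also have "\<dots> \<in> m.span (D ` P)" by (intro m.span_sum m.span_scale m.span_base imageI)
    finally show "f \<in> m.span (D ` P)" .
  qed
  ultimately show ?thesis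
    using point_mass_diff_independent[of P \<tau>, OF \<open>finite P\<close> disj]
    unfolding is_basis_of_def D_def by blast
qed

lemma reflection_half_period_disjoint:
  fixes m y y' h :: int
  assumes "m < y" "y < m + h" "m < y'" "y' < m + h"
  shows "(2 * m - y) mod (2 * h) \<noteq> y' mod (2 * h)"
proof
  assume "(2 * m - y) mod (2 * h) = y' mod (2 * h)"
  hence "2 * h dvd y + y' - 2 * m" by (simp add: mod_eq_dvd_iff dvd_diff_commute algebra_simps)
  hence "2 * h \<le> y + y' - 2 * m" using assms by (intro zdvd_imp_le) auto
  thus False using assms by simp
qed

lemma reflection_half_period_cover:
  fixes m x h :: int
  assumes "0 < h" and not_fixed: "(2 * m - x) mod (2 * h) \<noteq> x mod (2 * h)"
  shows "\<exists>y. m < y \<and> y < m + h \<and> (x mod (2 * h) = y mod (2 * h) \<or> (2 * m - x) mod (2 * h) = y mod (2 * h))"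
proof -
  define r where "r = (x - m) mod (2 * h)"
  have "x - m = 2 * h * ((x - m) div (2 * h)) + r"
    unfolding r_def by (rule mult_div_mod_eq[symmetric])
  then obtain q where x: "x = m + r + 2 * h * q" by (metis add.commute diff_add_cancel add.assoc)
  have r: "0 \<le> r" "r < 2 * h" using \<open>0 < h\<close> by (simp_all add: r_def)
  have x_mod: "x mod (2 * h) = (m + r) mod (2 * h)" and x_refl: "(2 * m - x) mod (2 * h) = (m - r) mod (2 * h)"
    unfolding x by (simp_all add: mod_eq_dvd_iff)
  consider "r = 0" | "0 < r" "r < h" | "r = h" | "h < r" using r(1) by linarith
  thus ?thesis
  proof cases
    case 1
    thus ?thesis using not_fixed x_mod x_refl by simp
  next
    case 2
    thus ?thesis using x_mod by (intro exI[of _ "m + r"]) simp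
  next
    case 3
    have "(m - h) mod (2 * h) = (m + h) mod (2 * h)"
      by (simp add: mod_eq_dvd_iff)
    thus ?thesis using not_fixed x_mod x_refl 3 by simp
  next
    case 4
    have "(m - r) mod (2 * h) = (m + 2 * h - r) mod (2 * h)"
      by (simp add: mod_eq_dvd_iff)
    thus ?thesis using x_refl 4 r by (intro exI[of _ "m + 2 * h - r"]) simp
  qed
qed

lemma even_steps_range_iff:
  fixes N s y :: int
  shows "(\<exists>k. (1 \<le> k \<and> k \<le> N - 1) \<and> y = 2 * k + s) \<longleftrightarrow> y mod 2 = s mod 2 \<and> s < y \<and> y < s + 2 * N"
proof
  assume "\<exists>k. (1 \<le> k \<and> k \<le> N - 1) \<and> y = 2 * k + s"
  thus "y mod 2 = s mod 2 \<and> s < y \<and> y < s + 2 * N" by auto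
next
  assume y: "y mod 2 = s mod 2 \<and> s < y \<and> y < s + 2 * N"
  hence "y = 2 * ((y - s) div 2) + s" by (simp add: mod_eq_dvd_iff)
  thus "\<exists>k. (1 \<le> k \<and> k \<le> N - 1) \<and> y = 2 * k + s" using y by (intro exI[of _ "(y - s) div 2"]) linarith
qed

lemma odd_steps_range_iff:
  fixes h N s y :: int
  assumes "2 * h \<le> N" "N \<le> 2 * h + 1"
  shows "(\<exists>k. (- h \<le> k \<and> k \<le> h - 1) \<and> y = 2 * k + 1 + s)
    \<longleftrightarrow> y mod 2 = (1 + s) mod 2 \<and> s - N < y \<and> y < s + N"
proof
  assume "\<exists>k. (- h \<le> k \<and> k \<le> h - 1) \<and> y = 2 * k + 1 + s"
  then obtain k where "- h \<le> k" "k \<le> h - 1" "y = 2 * k + 1 + s" by blast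
  thus "y mod 2 = (1 + s) mod 2 \<and> s - N < y \<and> y < s + N"
    using assms by (simp add: mod_eq_dvd_iff)
next
  assume y: "y mod 2 = (1 + s) mod 2 \<and> s - N < y \<and> y < s + N"
  hence "y = 2 * ((y - 1 - s) div 2) + 1 + s" by (simp add: mod_eq_dvd_iff)
  thus "\<exists>k. (- h \<le> k \<and> k \<le> h - 1) \<and> y = 2 * k + 1 + s" using y assms by (intro exI[of _ "(y - 1 - s) div 2"]) linarith
qed

definition sd_idx :: "nat \<Rightarrow> int \<Rightarrow> nat" where
  "sd_idx n m = nat (m mod int (4*n))"

lemma sd_elem_eq_point_mass: "sd_elem n m j = point_mass (sd_idx n m, j)"
  by (simp add: sd_elem_def point_mass_def sd_idx_def fun_eq_iff)

lemma int_sd_idx: "n \<ge> 1 \<Longrightarrow> int (sd_idx n m) = m mod (4 * int n)"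
  by (simp add: sd_idx_def)

lemma sd_idx_lt: "n \<ge> 1 \<Longrightarrow> sd_idx n m < 4*n"
  by (simp add: sd_idx_def nat_less_iff)

lemma sd_idx_eq_iff: "n \<ge> 1 \<Longrightarrow> sd_idx n x = sd_idx n y \<longleftrightarrow> x mod (4 * int n) = y mod (4 * int n)"
  by (simp add: sd_idx_def nat_eq_iff)

lemma sd_idx_int: "i < 4*n \<Longrightarrow> sd_idx n (int i) = i"
  by (simp add: sd_idx_def flip: of_nat_mod)

lemma sd_grp_iff: "(i, j) \<in> sd_grp n \<longleftrightarrow> i < 4*n \<and> j < 2"
  by (simp add: sd_grp_def)

lemma sd_mul_in_grp: "n \<ge> 1 \<Longrightarrow> sd_mul n x y \<in> sd_grp n"
  by (simp add: sd_mul_def sd_grp_def)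

lemma int_fst_sd_mul:
  assumes "n \<ge> 1"
  shows "int (fst (sd_mul n (i, j) (k, l))) = (int i + int k * (2 * int n - 1) ^ j) mod (4 * int n)"
  using assms by (simp add: sd_mul_def zmod_int of_nat_diff)

lemma sd_mul_cancel_right:
  assumes n: "n \<ge> 1" and y: "y \<in> sd_grp n" and z: "z \<in> sd_grp n"
    and eq: "sd_mul n y g = sd_mul n z g"
  shows "y = z"
proof -
  obtain i j i' j' k l where yzg: "y = (i, j)" "z = (i', j')" "g = (k, l)" by (cases y, cases z, cases g)
  have "(j + l) mod 2 = (j' + l) mod 2" using arg_cong[OF eq, of snd] unfolding yzg by (simp add: sd_mul_def)
  moreover have "j < 2" "j' < 2" using y z unfolding yzg by (simp_all add: sd_grp_iff)
  ultimately have jj: "j = j'" by presburger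
  have "(int i + int k * (2 * int n - 1) ^ j) mod (4 * int n) = (int i' + int k * (2 * int n - 1) ^ j) mod (4 * int n)"
    using arg_cong[OF eq, of "\<lambda>x. int (fst x)"] unfolding yzg jj int_fst_sd_mul[OF n] .
  hence "int i mod (4 * int n) = int i' mod (4 * int n)" by (simp add: mod_eq_dvd_iff)
  hence "i = i'" using y z unfolding yzg by (simp add: sd_grp_iff flip: of_nat_mod)
  with jj show ?thesis using yzg by simp
qed

lemma sd_mul_cancel_left:
  assumes n: "n \<ge> 1" and g: "g \<in> sd_grp n" and y: "y \<in> sd_grp n" and z: "z \<in> sd_grp n"
    and eq: "sd_mul n g y = sd_mul n g z"
  shows "y = z"
proof -
  obtain i j k l k' l' where yzg: "g = (i, j)" "y = (k, l)" "z = (k', l')" by (cases y, cases z, cases g)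
  define s where "s = 2 * int n - 1"
  have "(j + l) mod 2 = (j + l') mod 2" using arg_cong[OF eq, of snd] unfolding yzg by (simp add: sd_mul_def)
  moreover have "l < 2" "l' < 2" using y z unfolding yzg by (simp_all add: sd_grp_iff)
  ultimately have ll: "l = l'" by presburger
  have "(int i + int k * s ^ j) mod (4 * int n) = (int i + int k' * s ^ j) mod (4 * int n)"
    using arg_cong[OF eq, of "\<lambda>x. int (fst x)"] unfolding yzg s_def int_fst_sd_mul[OF n] .
  hence dvd: "4 * int n dvd (int k - int k') * s ^ j"
    by (simp add: mod_eq_dvd_iff algebra_simps)
  have "4 * int n dvd int k - int k'"
  proof (cases "j = 0")
    case True thus ?thesis using dvd by simp
  next
    case False
    hence "j = 1" using g yzg by (simp add: sd_grp_iff)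
    hence "4 * int n dvd (int k - int k') * s * s" using dvd by simp
    moreover have "(int k - int k') * s * s = (int k - int k') + 4 * int n * ((int k - int k') * (int n - 1))"
      by (simp add: s_def algebra_simps)
    ultimately show ?thesis by (simp add: dvd_add_left_iff)
  qed
  hence "k = k'" using y z unfolding yzg by (simp add: sd_grp_iff flip: mod_eq_dvd_iff of_nat_mod)
  with ll show ?thesis using yzg by simp
qed

lemma finite_sd_grp: "finite (sd_grp n)"
  by (simp add: sd_grp_def)

lemma sd_conv_outside:
  assumes "n \<ge> 1" "x \<notin> sd_grp n"
  shows "sd_conv n f g x = 0"
proof -
  have "sd_mul n y z \<noteq> x" for y z using sd_mul_in_grp[OF assms(1)] assms(2) by metis
  thus ?thesis unfolding sd_conv_def by simp
qed

lemma sd_conv_diff_left: "sd_conv n (f - g) h = sd_conv n f h - sd_conv n g h"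
  unfolding sd_conv_def by (auto simp: fun_eq_iff algebra_simps intro!: sum.cong simp flip: sum_subtractf)

lemma sd_conv_diff_right: "sd_conv n h (f - g) = sd_conv n h f - sd_conv n h g"
  unfolding sd_conv_def by (auto simp: fun_eq_iff algebra_simps intro!: sum.cong simp flip: sum_subtractf)

lemma sd_conv_point_mass_right:
  assumes "q \<in> sd_grp n"
  shows "sd_conv n f (point_mass q) x = (\<Sum>y\<in>sd_grp n. if sd_mul n y q = x then f y else 0)"
  unfolding sd_conv_def point_mass_def
  by (intro sum.cong refl) (simp add: if_distrib[of "\<lambda>c. f _ * c"] sum.If_cases finite_sd_grp assms)

lemma sd_conv_point_mass_left:
  assumes "p \<in> sd_grp n"
  shows "sd_conv n (point_mass p) g x = (\<Sum>z\<in>sd_grp n. if sd_mul n p z = x then g z else 0)"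
proof -
  have "(\<Sum>z\<in>sd_grp n. if sd_mul n y z = x then point_mass p y * g z else 0)
      = (if y = p then \<Sum>z\<in>sd_grp n. if sd_mul n p z = x then g z else 0 else 0)" for y
    by (cases "y = p") (simp_all add: point_mass_def cong: if_cong)
  thus ?thesis unfolding sd_conv_def using assms by (simp add: finite_sd_grp)
qed

lemma sd_conv_point_mass_right_mul:
  assumes n: "n \<ge> 1" and "y \<in> sd_grp n" "q \<in> sd_grp n"
  shows "sd_conv n f (point_mass q) (sd_mul n y q) = f y"
proof -
  have "(\<Sum>y'\<in>sd_grp n. if sd_mul n y' q = sd_mul n y q then f y' else 0)
      = (\<Sum>y'\<in>sd_grp n. if y' = y then f y' else 0)"
    using sd_mul_cancel_right[OF n] assms by (intro sum.cong) auto
  thus ?thesis using assms by (simp add: sd_conv_point_mass_right finite_sd_grp)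
qed

lemma sd_conv_point_mass_left_mul:
  assumes n: "n \<ge> 1" and "p \<in> sd_grp n" "z \<in> sd_grp n"
  shows "sd_conv n (point_mass p) g (sd_mul n p z) = g z"
proof -
  have "(\<Sum>z'\<in>sd_grp n. if sd_mul n p z' = sd_mul n p z then g z' else 0)
      = (\<Sum>z'\<in>sd_grp n. if z' = z then g z' else 0)"
    using sd_mul_cancel_left[OF n] assms by (intro sum.cong) auto
  thus ?thesis using assms by (simp add: sd_conv_point_mass_left finite_sd_grp)
qed

lemma sd_conv_point_mass_point_mass:
  assumes "p \<in> sd_grp n" "q \<in> sd_grp n"
  shows "sd_conv n (point_mass p) (point_mass q) = (point_mass (sd_mul n p q) :: _ \<Rightarrow> 'a::field)"
proof
  fix x
  have "(\<Sum>y\<in>sd_grp n. if sd_mul n y q = x then point_mass p y else 0)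
      = (\<Sum>y\<in>sd_grp n. if y = p then (if sd_mul n p q = x then 1 else 0) else (0::'a))"
    by (intro sum.cong) (auto simp: point_mass_def)
  also have "\<dots> = point_mass (sd_mul n p q) x"
    using assms by (simp add: finite_sd_grp point_mass_def eq_commute)
  finally show "sd_conv n (point_mass p) (point_mass q) x = (point_mass (sd_mul n p q) x :: 'a)"
    unfolding sd_conv_point_mass_right[OF assms(2)] .
qed

lemma anti_cent_point_mass:
  assumes n: "n \<ge> 1" and g: "g \<in> sd_grp n" and \<tau>: "\<tau> ` sd_grp n \<subseteq> sd_grp n"
    and conj: "\<And>y. y \<in> sd_grp n \<Longrightarrow> sd_mul n g (\<tau> y) = sd_mul n y g"
  shows "anti_cent n (point_mass g) = (antisym_space (sd_grp n) \<tau> :: (_ \<Rightarrow> 'a::field) set)"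
proof -
  have right: "sd_conv n \<alpha> (point_mass g) (sd_mul n y g) = \<alpha> y"
    and left: "sd_conv n (point_mass g) \<alpha> (sd_mul n y g) = \<alpha> (\<tau> y)"
    if "y \<in> sd_grp n" for y and \<alpha> :: "_ \<Rightarrow> 'a"
    using that \<tau> sd_conv_point_mass_right_mul[OF n that g] sd_conv_point_mass_left_mul[OF n g, of "\<tau> y"]
    by (auto simp: conj)
  have "inj_on (\<lambda>y. sd_mul n y g) (sd_grp n)"
    by (rule inj_onI) (rule sd_mul_cancel_right[OF n])
  hence onto: "(\<lambda>y. sd_mul n y g) ` sd_grp n = sd_grp n"
    using sd_mul_in_grp[OF n] by (intro endo_inj_surj finite_sd_grp) blast
  show ?thesis
  proof (intro set_eqI iffI)
    fix \<alpha> :: "_ \<Rightarrow> 'a" assume "\<alpha> \<in> anti_cent n (point_mass g)"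
    hence supp: "\<forall>x. x \<notin> sd_grp n \<longrightarrow> \<alpha> x = 0"
      and anti: "sd_conv n \<alpha> (point_mass g) = - sd_conv n (point_mass g) \<alpha>"
      by (auto simp: anti_cent_def sd_alg_def)
    have "\<alpha> (\<tau> y) = - \<alpha> y" if "y \<in> sd_grp n" for y
      using fun_cong[OF anti, of "sd_mul n y g"] right[OF that] left[OF that] by simp
    with supp show "\<alpha> \<in> antisym_space (sd_grp n) \<tau>" by (simp add: antisym_space_def)
  next
    fix \<alpha> :: "_ \<Rightarrow> 'a" assume "\<alpha> \<in> antisym_space (sd_grp n) \<tau>"
    hence supp: "\<forall>x. x \<notin> sd_grp n \<longrightarrow> \<alpha> x = 0" and anti: "\<forall>y\<in>sd_grp n. \<alpha> (\<tau> y) = - \<alpha> y"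
      by (auto simp: antisym_space_def)
    have "sd_conv n \<alpha> (point_mass g) x = - sd_conv n (point_mass g) \<alpha> x" for x
    proof (cases "x \<in> sd_grp n")
      case True
      then obtain y where "y \<in> sd_grp n" "x = sd_mul n y g" using onto by (metis imageE)
      thus ?thesis using right left anti by simp
    next
      case False
      thus ?thesis by (simp add: sd_conv_outside[OF n])
    qed
    with supp show "\<alpha> \<in> anti_cent n (point_mass g)"
      by (simp add: anti_cent_def sd_alg_def fun_eq_iff)
  qed
qed

definition sd_reflect :: "nat \<Rightarrow> (nat \<Rightarrow> int \<Rightarrow> int) \<Rightarrow> nat \<times> nat \<Rightarrow> nat \<times> nat" where
  "sd_reflect n c = (\<lambda>(i, j). (sd_idx n (2 * c j (int i mod 2) - int i), j))"

definition sd_half :: "nat \<Rightarrow> (nat \<Rightarrow> int \<Rightarrow> int) \<Rightarrow> (nat \<times> nat) set" where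
  "sd_half n c = {(sd_idx n y, j) | y j. j < 2 \<and> c j (y mod 2) < y \<and> y < c j (y mod 2) + 2 * int n}"

lemma mod_4n_mod_2: "(x::int) mod (4 * int n) mod 2 = x mod 2"
  by (rule mod_mod_cancel) simp

lemma sd_reflect_idx:
  assumes "n \<ge> 1"
  shows "sd_reflect n c (sd_idx n x, j) = (sd_idx n (2 * c j (x mod 2) - x), j)"
  using assms by (simp add: sd_reflect_def mod_4n_mod_2 sd_idx_eq_iff int_sd_idx mod_diff_right_eq)

lemma sd_grp_idxE:
  assumes "x \<in> sd_grp n"
  obtains i j where "x = (sd_idx n (int i), j)" "i < 4*n" "j < 2"
  using assms by (cases x) (simp add: sd_grp_iff sd_idx_int)

lemma sd_reflect_in_grp: "n \<ge> 1 \<Longrightarrow> sd_reflect n c ` sd_grp n \<subseteq> sd_grp n"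
  by (auto simp: sd_reflect_def sd_grp_iff sd_idx_lt)

lemma sd_reflect_involution:
  assumes n: "n \<ge> 1" and "x \<in> sd_grp n"
  shows "sd_reflect n c (sd_reflect n c x) = x"
proof -
  obtain i j where x: "x = (sd_idx n (int i), j)" using sd_grp_idxE[OF \<open>x \<in> _\<close>] by blast
  have "(2 * c j (int i mod 2) - int i) mod 2 = int i mod 2" by presburger
  thus ?thesis unfolding x by (simp add: sd_reflect_idx[OF n])
qed

lemma sd_half_disjoint:
  assumes n: "n \<ge> 1" and p: "p \<in> sd_half n c"
  shows "sd_reflect n c p \<notin> sd_half n c"
proof
  obtain y j where y: "p = (sd_idx n y, j)" "c j (y mod 2) < y" "y < c j (y mod 2) + 2 * int n"
    using p by (auto simp: sd_half_def)
  define m where "m = c j (y mod 2)"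
  assume "sd_reflect n c p \<in> sd_half n c"
  then obtain y' where y': "sd_idx n (2 * m - y) = sd_idx n y'"
    "c j (y' mod 2) < y'" "y' < c j (y' mod 2) + 2 * int n"
    using y(1) by (auto simp: sd_half_def sd_reflect_idx[OF n] m_def)
  hence "(2 * m - y) mod (2 * (2 * int n)) = y' mod (2 * (2 * int n))"
    using n by (simp add: sd_idx_eq_iff)
  moreover have "y' mod 2 = y mod 2"
  proof -
    have "(2 * m - y) mod 2 = y' mod 2"
      using calculation mod_4n_mod_2[of "2 * m - y" n] mod_4n_mod_2[of y' n] by simp
    thus ?thesis by presburger
  qed
  ultimately show False
    using reflection_half_period_disjoint[of m y "2 * int n" y'] y y' by (simp add: m_def)
qed

lemma sd_half_cover:
  assumes n: "n \<ge> 1" and x: "x \<in> sd_grp n" and moved: "sd_reflect n c x \<noteq> x"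
  shows "x \<in> sd_half n c \<or> sd_reflect n c x \<in> sd_half n c"
proof -
  obtain i j where xij: "x = (sd_idx n (int i), j)" "j < 2" using sd_grp_idxE[OF x] by blast
  define m where "m = c j (int i mod 2)"
  have refl_x: "sd_reflect n c x = (sd_idx n (2 * m - int i), j)"
    unfolding xij m_def by (rule sd_reflect_idx[OF n])
  have "sd_idx n (2 * m - int i) \<noteq> sd_idx n (int i)" using moved refl_x xij(1) by simp
  hence "(2 * m - int i) mod (2 * (2 * int n)) \<noteq> int i mod (2 * (2 * int n))"
    using n by (simp add: sd_idx_eq_iff)
  then obtain y where y: "m < y" "y < m + 2 * int n"
    and cases: "int i mod (2 * (2 * int n)) = y mod (2 * (2 * int n))
      \<or> (2 * m - int i) mod (2 * (2 * int n)) = y mod (2 * (2 * int n))"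
    using reflection_half_period_cover[of "2 * int n" m "int i"] n by auto
  have same_parity: "y mod 2 = int i mod 2"
    if "z mod (2 * (2 * int n)) = y mod (2 * (2 * int n))" "z mod 2 = int i mod 2" for z
    using that mod_4n_mod_2[of z n] mod_4n_mod_2[of y n] by simp
  have y_half: "(sd_idx n y, j) \<in> sd_half n c" if "y mod 2 = int i mod 2"
    unfolding sd_half_def using y xij(2) that by (auto simp: m_def)
  from cases show ?thesis
  proof
    assume "int i mod (2 * (2 * int n)) = y mod (2 * (2 * int n))"
    hence "x = (sd_idx n y, j)" "y mod 2 = int i mod 2"
      using xij(1) same_parity[of "int i"] n by (simp_all add: sd_idx_eq_iff)
    thus ?thesis using y_half by simp
  next
    assume "(2 * m - int i) mod (2 * (2 * int n)) = y mod (2 * (2 * int n))"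
    moreover have "(2 * m - int i) mod 2 = int i mod 2" by presburger
    ultimately have "sd_reflect n c x = (sd_idx n y, j)" "y mod 2 = int i mod 2"
      using refl_x same_parity[of "2 * m - int i"] n by (simp_all add: sd_idx_eq_iff)
    thus ?thesis using y_half by simp
  qed
qed

lemma sd_reflect_basis:
  assumes "n \<ge> 1" and "(2::'a::field) \<noteq> 0"
  shows "is_basis_of ((\<lambda>p. point_mass p - point_mass (sd_reflect n c p)) ` sd_half n c)
    (antisym_space (sd_grp n) (sd_reflect n c) :: (_ \<Rightarrow> 'a) set)"
proof (rule antisym_space_basis[OF finite_sd_grp sd_reflect_in_grp sd_reflect_involution])
  show "sd_half n c \<subseteq> sd_grp n" using assms(1) by (auto simp: sd_half_def sd_grp_iff sd_idx_lt)
qed (use assms sd_half_disjoint sd_half_cover in auto)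

text \<open>Conjugation by \<open>b\<close> multiplies exponents by \<open>2n - 1\<close>: \<open>i \<mapsto> -i\<close> for even \<open>i\<close> and
  \<open>i \<mapsto> 2n - i \<equiv> -2n - i\<close> for odd \<open>i\<close>.  On the coset \<open>a\<^sup>i b\<close>, conjugation by \<open>ab\<close> is
  \<open>i \<mapsto> 2 - i\<close> for odd \<open>i\<close> and \<open>i \<mapsto> 2n + 2 - i \<equiv> 2(1 - n) - i\<close> for even \<open>i\<close>.\<close>

definition b_centre :: "nat \<Rightarrow> nat \<Rightarrow> int \<Rightarrow> int" where
  "b_centre n j e = (if e = 0 then 0 else - int n)"

definition ab_centre :: "nat \<Rightarrow> nat \<Rightarrow> int \<Rightarrow> int" where
  "ab_centre n j e = (if j = 0 then b_centre n j e else if e = 0 then 1 - int n else 1)"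

lemma sd_mul_eqI:
  assumes n: "n \<ge> 1"
    and "(int (fst p) + int (fst q) * (2 * int n - 1) ^ snd p) mod (4 * int n)
       = (int (fst p') + int (fst q') * (2 * int n - 1) ^ snd p') mod (4 * int n)"
    and "(snd p + snd q) mod 2 = (snd p' + snd q') mod 2"
  shows "sd_mul n p q = sd_mul n p' q'"
proof -
  have "int (fst (sd_mul n p q)) = int (fst (sd_mul n p' q'))"
    using assms(2) int_fst_sd_mul[OF n, of "fst p" "snd p" "fst q" "snd q"]
      int_fst_sd_mul[OF n, of "fst p'" "snd p'" "fst q'" "snd q'"] by simp
  moreover have "snd (sd_mul n p q) = snd (sd_mul n p' q')" using assms(3) by (simp add: sd_mul_def)
  ultimately show ?thesis by (simp add: prod_eq_iff)
qed

lemma b_conj_reflect: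
  assumes n: "n \<ge> 1" and "y \<in> sd_grp n"
  shows "sd_mul n (0, 1) (sd_reflect n (b_centre n) y) = sd_mul n y (0, 1)"
proof -
  obtain i j where y: "y = (i, j)" by (cases y)
  define m where "m = b_centre n j (int i mod 2)"
  have refl: "sd_reflect n (b_centre n) (i, j) = (sd_idx n (2 * m - int i), j)"
    by (simp add: sd_reflect_def m_def)
  have "4 * int n dvd (2 * m - int i) * (2 * int n - 1) - int i"
  proof (cases "even i")
    case True
    then obtain t where "i = 2 * t" by blast
    hence "(2 * m - int i) * (2 * int n - 1) - int i = 4 * int n * (- int t)"
      by (simp add: m_def b_centre_def algebra_simps)
    thus ?thesis by simp
  next
    case False
    then obtain t where "i = 2 * t + 1" using oddE by blast
    hence "(2 * m - int i) * (2 * int n - 1) - int i = 4 * int n * (- int n - int t)"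
      by (simp add: m_def b_centre_def algebra_simps)
    thus ?thesis by simp
  qed
  hence "((2 * m - int i) mod (4 * int n) * (2 * int n - 1)) mod (4 * int n) = int i mod (4 * int n)"
    by (simp add: mod_mult_left_eq mod_eq_dvd_iff)
  thus ?thesis using n \<open>y \<in> _\<close> unfolding y refl
    by (intro sd_mul_eqI) (simp_all add: int_sd_idx sd_grp_iff)
qed

lemma ab_conj_reflect:
  assumes n: "n \<ge> 1" and "y \<in> sd_grp n"
  shows "sd_mul n (1, 1) (sd_reflect n (ab_centre n) y) = sd_mul n y (1, 1)"
proof -
  obtain i j where y: "y = (i, j)" by (cases y)
  have j: "j = 0 \<or> j = 1" using \<open>y \<in> _\<close> by (auto simp: y sd_grp_iff)
  define m where "m = ab_centre n j (int i mod 2)"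
  have refl: "sd_reflect n (ab_centre n) (i, j) = (sd_idx n (2 * m - int i), j)"
    by (simp add: sd_reflect_def m_def)
  have "4 * int n dvd 1 + (2 * m - int i) * (2 * int n - 1) - (int i + (2 * int n - 1) ^ j)"
  proof (cases "even i")
    case True
    then obtain t where "i = 2 * t" by blast
    hence "1 + (2 * m - int i) * (2 * int n - 1) - (int i + (2 * int n - 1) ^ j)
        = 4 * int n * (if j = 0 then - int t else 1 - int n - int t)"
      using j by (auto simp: m_def ab_centre_def b_centre_def algebra_simps)
    thus ?thesis by (metis dvd_triv_left)
  next
    case False
    then obtain t where "i = 2 * t + 1" using oddE by blast
    hence "1 + (2 * m - int i) * (2 * int n - 1) - (int i + (2 * int n - 1) ^ j)
        = 4 * int n * (if j = 0 then - int n - int t else - int t)"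
      using j by (auto simp: m_def ab_centre_def b_centre_def algebra_simps)
    thus ?thesis by (metis dvd_triv_left)
  qed
  hence "(1 + (2 * m - int i) * (2 * int n - 1)) mod (4 * int n) = (int i + (2 * int n - 1) ^ j) mod (4 * int n)"
    by (simp add: mod_eq_dvd_iff)
  hence "(1 + (2 * m - int i) mod (4 * int n) * (2 * int n - 1)) mod (4 * int n)
      = (int i + (2 * int n - 1) ^ j) mod (4 * int n)"
    by (metis mod_add_right_eq mod_mult_left_eq)
  thus ?thesis using n \<open>y \<in> _\<close> unfolding y refl
    by (intro sd_mul_eqI) (simp_all add: int_sd_idx sd_grp_iff add.commute)
qed

lemma sd_idx_0: "sd_idx n 0 = 0"
  by (simp add: sd_idx_def)

lemma sd_b_eq: "n \<ge> 1 \<Longrightarrow> sd_b n = point_mass (0, 1)"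
  by (simp add: sd_elem_eq_point_mass sd_idx_def)

lemma sd_a_eq: "n \<ge> 1 \<Longrightarrow> sd_a n = point_mass (1, 0)"
  by (simp add: sd_elem_eq_point_mass sd_idx_def)

lemma sd_a_mul_b:
  assumes n: "n \<ge> 1"
  shows "sd_conv n (sd_a n) (sd_b n) = point_mass (1, 1)"
  unfolding sd_a_eq[OF n] sd_b_eq[OF n]
  using n by (simp add: sd_conv_point_mass_point_mass sd_grp_iff sd_mul_def)

lemma anti_cent_b:
  assumes n: "n \<ge> 1"
  shows "anti_cent n (sd_b n) = (antisym_space (sd_grp n) (sd_reflect n (b_centre n)) :: (_ \<Rightarrow> 'a::field) set)"
  unfolding sd_b_eq[OF n]
  using n b_conj_reflect[OF n] sd_reflect_in_grp[OF n]
  by (intro anti_cent_point_mass) (simp_all add: sd_grp_iff)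

lemma anti_cent_ab:
  assumes n: "n \<ge> 1"
  shows "anti_cent n (sd_conv n (sd_a n) (sd_b n))
    = (antisym_space (sd_grp n) (sd_reflect n (ab_centre n)) :: (_ \<Rightarrow> 'a::field) set)"
  unfolding sd_a_mul_b[OF n]
  using n ab_conj_reflect[OF n] sd_reflect_in_grp[OF n]
  by (intro anti_cent_point_mass) (simp_all add: sd_grp_iff)

lemma sd_apow_mul_b:
  assumes n: "n \<ge> 1"
  shows "sd_conv n (sd_apow n e) (sd_b n) = sd_elem n e 1"
  unfolding sd_elem_eq_point_mass
  using n by (simp add: sd_conv_point_mass_point_mass sd_grp_iff sd_idx_lt sd_mul_def sd_idx_0)

lemma sd_a_mul_apow:
  assumes n: "n \<ge> 1"
  shows "sd_conv n (sd_a n) (sd_apow n e) = sd_apow n (e + 1)"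
proof -
  have "int ((1 + sd_idx n e) mod (4 * n)) = int (sd_idx n (e + 1))"
    using n by (simp add: int_sd_idx zmod_int mod_add_right_eq add.commute)
  hence "sd_mul n (1, 0) (sd_idx n e, 0) = (sd_idx n (e + 1), 0)"
    by (simp add: sd_mul_def)
  moreover have "sd_idx n 1 = 1" using sd_idx_int[of 1 n] n by simp
  ultimately show ?thesis unfolding sd_elem_eq_point_mass
    using n by (simp add: sd_conv_point_mass_point_mass sd_grp_iff sd_idx_lt)
qed

definition sd_half_part :: "nat \<Rightarrow> (nat \<Rightarrow> int \<Rightarrow> int) \<Rightarrow> nat \<Rightarrow> int \<Rightarrow> (nat \<times> nat) set" where
  "sd_half_part n c j e = {(sd_idx n y, j) | y. y mod 2 = e \<and> c j e < y \<and> y < c j e + 2 * int n}"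

lemma sd_half_eq_parts:
  "sd_half n c = sd_half_part n c 0 0 \<union> sd_half_part n c 1 0 \<union> sd_half_part n c 0 1 \<union> sd_half_part n c 1 1"
proof -
  have "sd_half n c = (\<Union>j\<in>{0, 1}. \<Union>e\<in>{0, 1}. sd_half_part n c j e)"
  proof (intro set_eqI iffI)
    fix x assume "x \<in> sd_half n c"
    then obtain y j where x: "x = (sd_idx n y, j)" "j < 2" "c j (y mod 2) < y" "y < c j (y mod 2) + 2 * int n"
      unfolding sd_half_def by blast
    hence part: "x \<in> sd_half_part n c j (y mod 2)" unfolding sd_half_part_def by blast
    have j: "j \<in> {0, 1}" using x(2) by auto
    have e: "y mod 2 \<in> {0, 1}" by (simp; presburger)
    show "x \<in> (\<Union>j\<in>{0, 1}. \<Union>e\<in>{0, 1}. sd_half_part n c j e)"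
      by (rule UN_I[OF j], rule UN_I[OF e], rule part)
  next
    fix x assume "x \<in> (\<Union>j\<in>{0, 1}. \<Union>e\<in>{0, 1}. sd_half_part n c j e)"
    then obtain j e y where "j \<in> {0, 1}" "x = (sd_idx n y, j)" "y mod 2 = e" "c j e < y" "y < c j e + 2 * int n"
      unfolding sd_half_part_def by auto
    thus "x \<in> sd_half n c" unfolding sd_half_def by auto
  qed
  thus ?thesis by auto
qed

lemma sd_elem_differences_eq_image:
  assumes n: "n \<ge> 1"
    and range: "\<And>y. (\<exists>k. P k \<and> y = g k) \<longleftrightarrow> y mod 2 = e \<and> c j e < y \<and> y < c j e + 2 * int n"
    and reflected: "\<And>k. P k \<Longrightarrow> (2 * c j e - g k) mod (4 * int n) = g' k mod (4 * int n)"
  shows "{sd_elem n (g k) j - sd_elem n (g' k) j | k. P k}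
    = (\<lambda>p. point_mass p - point_mass (sd_reflect n c p)) ` sd_half_part n c j e"
proof -
  have half: "sd_half_part n c j e = (\<lambda>k. (sd_idx n (g k), j)) ` {k. P k}"
  proof (intro equalityI subsetI)
    fix p assume "p \<in> sd_half_part n c j e"
    then obtain y where "p = (sd_idx n y, j)" "y mod 2 = e \<and> c j e < y \<and> y < c j e + 2 * int n"
      unfolding sd_half_part_def by auto
    moreover from this obtain k where "P k" "y = g k" using range by blast
    ultimately show "p \<in> (\<lambda>k. (sd_idx n (g k), j)) ` {k. P k}" by simp
  next
    fix p assume "p \<in> (\<lambda>k. (sd_idx n (g k), j)) ` {k. P k}"
    then obtain k where "P k" "p = (sd_idx n (g k), j)" by auto
    moreover have "g k mod 2 = e \<and> c j e < g k \<and> g k < c j e + 2 * int n"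
      using range[of "g k"] \<open>P k\<close> by blast
    ultimately show "p \<in> sd_half_part n c j e" unfolding sd_half_part_def by auto
  qed
  have elem: "sd_elem n (g k) j - sd_elem n (g' k) j
      = point_mass (sd_idx n (g k), j) - point_mass (sd_reflect n c (sd_idx n (g k), j))" if "P k" for k
  proof -
    have "g k mod 2 = e" using range[of "g k"] that by blast
    hence "sd_reflect n c (sd_idx n (g k), j) = (sd_idx n (g' k), j)"
      using reflected[OF that] n by (simp add: sd_reflect_idx sd_idx_eq_iff)
    thus ?thesis by (simp add: sd_elem_eq_point_mass)
  qed
  have "{sd_elem n (g k) j - sd_elem n (g' k) j | k. P k} = (\<lambda>k. sd_elem n (g k) j - sd_elem n (g' k) j) ` {k. P k}"
    by blast
  also have "\<dots> = (\<lambda>k. point_mass (sd_idx n (g k), j) - point_mass (sd_reflect n c (sd_idx n (g k), j))) ` {k. P k}"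
    using elem by (intro image_cong) auto
  finally show ?thesis unfolding half image_image .
qed

lemma int_div_2_bounds: "2 * (int n div 2) \<le> int n" "int n \<le> 2 * (int n div 2) + 1"
  by presburger+

lemma anti_cent_b_basis:
  fixes n :: nat
  assumes n: "n \<ge> 1" and two: "(2::'a::field) \<noteq> 0"
  shows "is_basis_of
      ({sd_apow n (2*k) - sd_apow n (-2*k) | k. 1 \<le> k \<and> k \<le> int n - 1}
       \<union> {sd_conv n (sd_apow n (2*k) - sd_apow n (-2*k)) (sd_b n) | k. 1 \<le> k \<and> k \<le> int n - 1}
       \<union> {sd_apow n (2*k+1) - sd_apow n (2 * int n - (2*k+1)) | k.
            - (int n div 2) \<le> k \<and> k \<le> int n div 2 - 1}
       \<union> {sd_conv n (sd_apow n (2*k+1) - sd_apow n (2 * int n - (2*k+1))) (sd_b n) | k.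
            - (int n div 2) \<le> k \<and> k \<le> int n div 2 - 1})
      (anti_cent n (sd_b n) :: (nat \<times> nat \<Rightarrow> 'a) set)"
  (is "is_basis_of (?S1 \<union> ?S2 \<union> ?S3 \<union> ?S4) _")
proof -
  let ?D = "\<lambda>p. point_mass p - point_mass (sd_reflect n (b_centre n) p)"
  note evens = even_steps_range_iff[where N = "int n" and s = 0]
    and odds = odd_steps_range_iff[OF int_div_2_bounds, where s = 0]
  note times_b = sd_conv_diff_left sd_apow_mul_b[OF n]
  have S1: "?S1 = ?D ` sd_half_part n (b_centre n) 0 0"
    by (rule sd_elem_differences_eq_image[OF n]) (use evens in \<open>simp_all add: b_centre_def\<close>)
  have S2: "?S2 = ?D ` sd_half_part n (b_centre n) 1 0"
    unfolding times_b
    by (rule sd_elem_differences_eq_image[OF n]) (use evens in \<open>simp_all add: b_centre_def\<close>)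
  have S3: "?S3 = ?D ` sd_half_part n (b_centre n) 0 1"
    by (rule sd_elem_differences_eq_image[OF n]) (use odds in \<open>simp_all add: b_centre_def mod_eq_dvd_iff\<close>)
  have S4: "?S4 = ?D ` sd_half_part n (b_centre n) 1 1"
    unfolding times_b
    by (rule sd_elem_differences_eq_image[OF n]) (use odds in \<open>simp_all add: b_centre_def mod_eq_dvd_iff\<close>)
  show ?thesis
    unfolding S1 S2 S3 S4 image_Un[symmetric] sd_half_eq_parts[symmetric] anti_cent_b[OF n]
    by (rule sd_reflect_basis[OF n two])
qed

lemma anti_cent_ab_basis:
  fixes n :: nat
  assumes n: "n \<ge> 1" and two: "(2::'a::field) \<noteq> 0"
  shows "is_basis_of
      ({sd_apow n (2*k) - sd_apow n (-2*k) | k. 1 \<le> k \<and> k \<le> int n - 1}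
       \<union> {sd_conv n (sd_conv n (sd_a n) (sd_apow n (2*k) - sd_apow n (-2*k))) (sd_b n) | k.
            1 \<le> k \<and> k \<le> int n - 1}
       \<union> {sd_apow n (2*k+1) - sd_apow n (2 * int n - (2*k+1)) | k.
            - (int n div 2) \<le> k \<and> k \<le> int n div 2 - 1}
       \<union> {sd_conv n (sd_conv n (sd_a n) (sd_apow n (2*k+1) - sd_apow n (2 * int n - (2*k+1)))) (sd_b n) | k.
            - (int n div 2) \<le> k \<and> k \<le> int n div 2 - 1})
      (anti_cent n (sd_conv n (sd_a n) (sd_b n)) :: (nat \<times> nat \<Rightarrow> 'a) set)"
  (is "is_basis_of (?S1 \<union> ?S2 \<union> ?S3 \<union> ?S4) _")
proof -
  let ?D = "\<lambda>p. point_mass p - point_mass (sd_reflect n (ab_centre n) p)"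
  note evens = even_steps_range_iff[where N = "int n"]
    and odds = odd_steps_range_iff[OF int_div_2_bounds]
  note times_a_b = sd_conv_diff_right sd_a_mul_apow[OF n] sd_conv_diff_left sd_apow_mul_b[OF n]
  have S1: "?S1 = ?D ` sd_half_part n (ab_centre n) 0 0"
    by (rule sd_elem_differences_eq_image[OF n])
      (use evens[where s = 0] in \<open>simp_all add: ab_centre_def b_centre_def\<close>)
  have S2: "?S2 = ?D ` sd_half_part n (ab_centre n) 1 1"
    unfolding times_a_b
    by (rule sd_elem_differences_eq_image[OF n])
      (use evens[where s = 1] in \<open>simp_all add: ab_centre_def\<close>)
  have S3: "?S3 = ?D ` sd_half_part n (ab_centre n) 0 1"
    by (rule sd_elem_differences_eq_image[OF n])
      (use odds[where s = 0] in \<open>simp_all add: ab_centre_def b_centre_def mod_eq_dvd_iff\<close>)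
  have S4: "?S4 = ?D ` sd_half_part n (ab_centre n) 1 0"
    unfolding times_a_b
    by (rule sd_elem_differences_eq_image[OF n])
      (use odds[where s = 1] in \<open>auto simp: ab_centre_def mod_eq_dvd_iff\<close>)
  have parts: "sd_half n (ab_centre n) = sd_half_part n (ab_centre n) 0 0 \<union> sd_half_part n (ab_centre n) 1 1
      \<union> sd_half_part n (ab_centre n) 0 1 \<union> sd_half_part n (ab_centre n) 1 0"
    unfolding sd_half_eq_parts by blast
  show ?thesis
    unfolding S1 S2 S3 S4 image_Un[symmetric] parts[symmetric] anti_cent_ab[OF n]
    by (rule sd_reflect_basis[OF n two])
qed

lemma two_neq_zero_if_CHAR_neq_2:
  assumes "CHAR('a::{semiring_1, zero_neq_one}) \<noteq> 2"
  shows "(2::'a) \<noteq> 0"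
proof
  assume "(2::'a) = 0"
  hence "of_nat 2 = (0::'a)" by simp
  hence "CHAR('a) dvd 2" by (simp only: of_nat_eq_0_iff_char_dvd)
  hence "CHAR('a) \<in> {1, 2}" using dvd_imp_le[of "CHAR('a)" 2] by (cases "CHAR('a)") auto
  thus False using assms CHAR_not_1 by auto
qed

theorem lemma5p2:
  fixes n :: nat
  assumes "n \<ge> 1"
    and "CHAR('a::field) = 0 \<or> (prime (CHAR('a)) \<and> odd (CHAR('a)))"
  shows "is_basis_of
      ({sd_apow n (2*k) - sd_apow n (-2*k) | k. 1 \<le> k \<and> k \<le> int n - 1}
       \<union> {sd_conv n (sd_apow n (2*k) - sd_apow n (-2*k)) (sd_b n) | k. 1 \<le> k \<and> k \<le> int n - 1}
       \<union> {sd_apow n (2*k+1) - sd_apow n (2 * int n - (2*k+1)) | k.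
            - (int n div 2) \<le> k \<and> k \<le> int n div 2 - 1}
       \<union> {sd_conv n (sd_apow n (2*k+1) - sd_apow n (2 * int n - (2*k+1))) (sd_b n) | k.
            - (int n div 2) \<le> k \<and> k \<le> int n div 2 - 1})
      (anti_cent n (sd_b n) :: (nat \<times> nat \<Rightarrow> 'a) set)
   \<and> is_basis_of
      ({sd_apow n (2*k) - sd_apow n (-2*k) | k. 1 \<le> k \<and> k \<le> int n - 1}
       \<union> {sd_conv n (sd_conv n (sd_a n) (sd_apow n (2*k) - sd_apow n (-2*k))) (sd_b n) | k.
            1 \<le> k \<and> k \<le> int n - 1}
       \<union> {sd_apow n (2*k+1) - sd_apow n (2 * int n - (2*k+1)) | k.
            - (int n div 2) \<le> k \<and> k \<le> int n div 2 - 1}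
       \<union> {sd_conv n (sd_conv n (sd_a n) (sd_apow n (2*k+1) - sd_apow n (2 * int n - (2*k+1)))) (sd_b n) | k.
            - (int n div 2) \<le> k \<and> k \<le> int n div 2 - 1})
      (anti_cent n (sd_conv n (sd_a n) (sd_b n)) :: (nat \<times> nat \<Rightarrow> 'a) set)"
proof -
  have "CHAR('a) \<noteq> 2" using assms(2) by auto
  hence "(2::'a) \<noteq> 0" by (rule two_neq_zero_if_CHAR_neq_2)
  thus ?thesis using anti_cent_b_basis[OF assms(1)] anti_cent_ab_basis[OF assms(1)] by blast
qed

end
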